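(* (a) There exist an absolute constant $C_0$ and, for every $n\ge1$, a deterministic exploration algorithm which, knowing only $n$ (and neither $k$ nor any bound on the period), solves PVG-Exploration of every feasible PV graph with distinct site identifiers and $n$ sites (homogeneous or heterogeneous, arbitrary routes), performing at most $C_0\,k\,p^2$ moves, where $k$ is the number of carriers and $p$ the period. (b) There exist an absolute constant $C_0$ and, for every $n\ge1$, a deterministic exploration algorithm which, knowing only $n$ and that the system is homogeneous, solves PVG-Exploration of every feasible homogeneous PV graph with distinct site identifiers and $n$ sites, performing at most $C_0\,k\,p$ moves.
   Context: A PV (periodically varying) system consists of a finite set $S$ of $n$ sites and a set $C$ of $k\le n$ carriers. Each carrier $c$ has a distinct identifier and a route $\pi(c)=\langle x_0,\dots,x_{p(c)-1}\rangle$, a finite sequence of sites (repetitions allowed) of length $p(c)\ge 1$ called its period; $\pi(c)[j]=x_{j \bmod p(c)}$. At each time $t\in\mathbb{N}$ carrier $c$ is at site $\pi(c)[t]$ and moves to $\pi(c)[t+1]$. The PV graph $\vec G_R$ is the directed edge-labelled multigraph on $S$ with edges $(x_i,x_{i+1},i)$, $0\le i<p(c)$, for every carrier. Its period is $p=\max_{c}p(c)$; it is homogeneous if all periods are equal, heterogeneous otherwise. In a system with ids the sites have distinct identifiers. An exploring agent is injected at time $0$ at a site of $\mathrm{start}(\vec G_R)=\{\pi(c)[0]:c\in C\}$. If at time $t$ the agent is at site $x$, it must either choose a carrier $c$ with $\pi(c)[t]=x$ and ride with it to $\pi(c)[t+1]$ (one move), or halt and exit; it cannot wait at a site. At each time the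 agent observes the identifiers of the carriers present at its current site and the identifier of that site. An exploration algorithm is a deterministic rule mapping the agent's a priori knowledge and history of observations to its next action. An algorithm solves PVG-Exploration of $\vec G_R$ if from every injection site the agent visits every site of $S$ and halts after finitely many moves. $\vec G_R$ is feasible if from the starting point of every carrier there exists a walk realizable by the agent (riding carriers and switching between carriers at the same site at the same time) visiting all sites. *)

theory Defs
  imports Main
begin

record pvsys =
  sites :: "nat set"
  carriers :: "nat set"
  route :: "nat \<Rightarrow> nat list"

definition pv_wf :: "pvsys \<Rightarrow> bool" where
  "pv_wf R \<longleftrightarrow> finite (sites R) \<and> finite (carriers R) \<and> carriers R \<noteq> {}
     \<and> card (carriers R) \<le> card (sites R)
     \<and> (\<forall>c\<in>carriers R. route R c \<noteq> [] \<and> set (route R c) \<subseteq> sites R)"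

definition at :: "pvsys \<Rightarrow> nat \<Rightarrow> nat \<Rightarrow> nat" where
  "at R c t = route R c ! (t mod length (route R c))"

definition period :: "pvsys \<Rightarrow> nat" where
  "period R = Max ((\<lambda>c. length (route R c)) ` carriers R)"

definition homogeneous :: "pvsys \<Rightarrow> bool" where
  "homogeneous R \<longleftrightarrow> (\<forall>c\<in>carriers R. \<forall>d\<in>carriers R. length (route R c) = length (route R d))"

definition start :: "pvsys \<Rightarrow> nat set" where
  "start R = (\<lambda>c. at R c 0) ` carriers R"

definition feasible :: "pvsys \<Rightarrow> bool" where
  "feasible R \<longleftrightarrow> (\<forall>x0\<in>start R. \<exists>m y. y 0 = x0
     \<and> (\<forall>i<m. \<exists>c\<in>carriers R. at R c i = y i \<and> at R c (Suc i) = y (Suc i))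
     \<and> sites R \<subseteq> y ` {..m})"

text \<open>Agent actions and observations. At time t the agent observes the identifier of its
  current site and the identifiers of the carriers present there.\<close>
datatype action = Halt | Ride nat

type_synonym obs = "nat \<times> nat set"
type_synonym algorithm = "obs list \<Rightarrow> action"

definition observe :: "pvsys \<Rightarrow> nat \<Rightarrow> nat \<Rightarrow> obs" where
  "observe R x t = (x, {c \<in> carriers R. at R c t = x})"

text \<open>History of observations up to and including time t (length t+1) of the agent
  running algorithm A, injected at x0.\<close>
fun hist :: "pvsys \<Rightarrow> algorithm \<Rightarrow> nat \<Rightarrow> nat \<Rightarrow> obs list" where
  "hist R A x0 0 = [observe R x0 0]"
| "hist R A x0 (Suc t) =
     (let h = hist R A x0 t;
          x = (case A h of Ride c \<Rightarrow> at R c (Suc t) | Halt \<Rightarrow> fst (last h))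
      in h @ [observe R x (Suc t)])"

definition agent_pos :: "pvsys \<Rightarrow> algorithm \<Rightarrow> nat \<Rightarrow> nat \<Rightarrow> nat" where
  "agent_pos R A x0 t = fst (last (hist R A x0 t))"

definition explores_within :: "pvsys \<Rightarrow> algorithm \<Rightarrow> nat \<Rightarrow> bool" where
  "explores_within R A B \<longleftrightarrow> (\<forall>x0\<in>start R. \<exists>m\<le>B.
     (\<forall>t<m. \<exists>c\<in>carriers R. A (hist R A x0 t) = Ride c \<and> at R c t = agent_pos R A x0 t)
     \<and> A (hist R A x0 m) = Halt
     \<and> sites R \<subseteq> agent_pos R A x0 ` {..m})"

end

theory Submission
  imports Defs
begin

(* Both bounds follow from one algorithm and one estimate.  Call L a common period of a PV
   system if every two carriers have a common period of length at most L; in general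
   p^2 is one (the product of the two route lengths), in a homogeneous system p is one.

   It performs a depth-first search of the graph whose vertices
   are the carriers and whose edges are meetings, under a guess T of the common period:
   it scans the current carrier for T steps to record the carriers it meets, and waits at
   most T steps for a chosen neighbour (or the parent) to come along.  When a wait fails
   or the search is over, it starts again with guess 2T.  It halts as soon as it has seen
   n distinct sites.  Once T is at least L every scan is complete and no wait fails, so by
   feasibility the search of that phase visits every site (lemma search_complete).
   A potential that drops at every step of a phase and is at most 5KT at its start bounds
   the total running time by 20 K L (lemma covered_within). *)

section \<open>Periodic sequences\<close>

lemma residue_in_window:
  assumes "0 < L" "L \<le> T" "T \<le> Suc u" "r < L"
  shows "\<exists>j<T. (u - j) mod L = r"
proof -
  define j where "j = (u + L - r) mod L"
  have jL: "j < L" using assms by (simp add: j_def)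
  have ju: "j \<le> u" using jL assms by linarith
  have ij: "int j = (int u + int L - int r) mod int L"
    using assms by (simp add: j_def zmod_int of_nat_diff)
  have "int ((u - j) mod L) = (int u - (int u + int L - int r) mod int L) mod int L"
    using ju ij by (simp add: zmod_int of_nat_diff)
  also have "\<dots> = (int u - (int u + int L - int r)) mod int L" by (simp add: mod_diff_right_eq)
  also have "\<dots> = int r" using assms by (simp add: mod_pos_pos_trivial)
  finally have "(u - j) mod L = r" by simp
  then show ?thesis using jL assms by (intro exI[of _ j]) auto
qed

lemma periodic_mod:
  assumes per: "\<And>t. f (t + L) = f t"
  shows "f t = f (t mod (L::nat))"
proof -
  have "f (r + L * q) = f r" for q r
  proof (induction q)
    case (Suc q)
    have "f (r + L * Suc q) = f ((r + L * q) + L)" by (simp add: algebra_simps)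
    then show ?case using Suc per by simp
  qed simp
  then show ?thesis by (metis mod_div_mult_eq mult.commute)
qed

text \<open>A sequence of period L takes each of its values within any window of
  T \<ge> L consecutive times.  This is why a scan of length at least the period
  sees everything a carrier will ever meet.\<close>
lemma periodic_window:
  fixes f :: "nat \<Rightarrow> 'a"
  assumes per: "\<And>t. f (t + L) = f t" and "0 < L" "L \<le> T" "T \<le> Suc u"
  shows "\<exists>j<T. f (u - j) = f t0"
proof -
  obtain j where j: "j < T" "(u - j) mod L = t0 mod L"
    using residue_in_window[of L T u "t0 mod L"] assms(2-4) by auto
  have mod_eq: "f t = f (t mod L)" for t by (rule periodic_mod) (rule per)
  have "f (u - j) = f ((u - j) mod L)" by (rule mod_eq)
  also have "\<dots> = f t0" using j(2) mod_eq[of t0] by simp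
  finally show ?thesis using j(1) by blast
qed

lemma pow2_bracket:
  assumes "1 \<le> (L::nat)"
  shows "\<exists>J. L \<le> 2^J \<and> 2^J \<le> 2*L"
proof -
  have ex: "\<exists>J. L \<le> 2^J" using less_exp[of L] by (intro exI[of _ L]) simp
  define J where "J = (LEAST J. L \<le> 2^J)"
  have J1: "L \<le> 2^J" unfolding J_def using LeastI_ex[OF ex] .
  have "2^J \<le> 2*L"
  proof (cases J)
    case 0 then show ?thesis using assms by simp
  next
    case (Suc J')
    have "\<not> L \<le> 2^J'" using not_less_Least[of J' "\<lambda>J. L \<le> 2^J"] Suc unfolding J_def by simp
    then show ?thesis using Suc by simp
  qed
  then show ?thesis using J1 by blast
qed

lemma double_pow2_le:
  assumes "T = (2::nat)^a" "T < 2^J"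
  shows "2*T \<le> 2^J"
proof -
  have "a < J" using assms power_strict_increasing_iff[of "2::nat" a J] by simp
  hence "(2::nat)^(Suc a) \<le> 2^J" by (intro power_increasing) simp_all
  then show ?thesis using assms(1) by simp
qed

definition meet :: "pvsys \<Rightarrow> nat \<Rightarrow> nat \<Rightarrow> bool" where
  "meet R c e \<longleftrightarrow> (\<exists>t. at R c t = at R e t)"

definition linked :: "pvsys \<Rightarrow> nat \<Rightarrow> nat \<Rightarrow> bool" where
  "linked R c e \<longleftrightarrow> c \<in> carriers R \<and> e \<in> carriers R \<and> meet R c e"

fun chain :: "pvsys \<Rightarrow> nat list \<Rightarrow> bool" where
  "chain R (a # b # r) = (meet R a b \<and> chain R (b # r))"
| "chain R _ = True"

lemma meet_sym: "meet R c e = meet R e c"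
  unfolding meet_def by metis

lemma linked_sym: "(linked R)\<inverse>\<inverse> = linked R"
  by (auto simp: linked_def meet_sym fun_eq_iff)

lemma at_in_route: "c \<in> carriers R \<Longrightarrow> pv_wf R \<Longrightarrow> at R c t \<in> set (route R c)"
  unfolding at_def pv_wf_def by auto

lemma at_period: "at R c (t + length (route R c) * q) = at R c t"
  unfolding at_def by simp

text \<open>common_period R L: every two carriers share a period of length at most
  L.  This is all the exploration algorithm needs to know about the routes.\<close>
definition common_period :: "pvsys \<Rightarrow> nat \<Rightarrow> bool" where
  "common_period R Lm \<longleftrightarrow> (\<forall>c\<in>carriers R. \<forall>d\<in>carriers R. \<exists>L. 0 < L \<and> L \<le> Lm \<and>
      (\<forall>t. at R c (t+L) = at R c t \<and> at R d (t+L) = at R d t))"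

lemma length_route_le_period: "pv_wf R \<Longrightarrow> c \<in> carriers R \<Longrightarrow> length (route R c) \<le> period R"
  unfolding period_def pv_wf_def by (auto intro: Max_ge)

lemma length_route_pos: "pv_wf R \<Longrightarrow> c \<in> carriers R \<Longrightarrow> 0 < length (route R c)"
  unfolding pv_wf_def by auto

text \<open>In general the product of two periods is a common period.\<close>
lemma common_period_general:
  assumes "pv_wf R" shows "common_period R (period R ^ 2)"
  unfolding common_period_def
proof (intro ballI)
  fix c d assume c: "c \<in> carriers R" and d: "d \<in> carriers R"
  let ?L = "length (route R c) * length (route R d)"
  have "0 < ?L" using length_route_pos[OF assms c] length_route_pos[OF assms d] by simp
  moreover have "?L \<le> period R ^ 2"
    using length_route_le_period[OF assms c] length_route_le_period[OF assms d]
    by (simp add: power2_eq_square mult_le_mono)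
  moreover have "\<forall>t. at R c (t + ?L) = at R c t \<and> at R d (t + ?L) = at R d t"
    using at_period[of R c _ "length (route R d)"] at_period[of R d _ "length (route R c)"]
    by (simp add: mult.commute)
  ultimately show "\<exists>L>0. L \<le> period R ^ 2 \<and>
      (\<forall>t. at R c (t + L) = at R c t \<and> at R d (t + L) = at R d t)"
    by blast
qed

lemma common_period_homogeneous:
  assumes "pv_wf R" "homogeneous R" shows "common_period R (period R)"
  unfolding common_period_def
proof (intro ballI)
  fix c d assume c: "c \<in> carriers R" and d: "d \<in> carriers R"
  let ?L = "length (route R c)"
  have eq: "length (route R d) = ?L" using assms(2) c d unfolding homogeneous_def by metis
  have "0 < ?L" using length_route_pos[OF assms(1) c] by simp
  moreover have "?L \<le> period R" using length_route_le_period[OF assms(1) c] .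
  moreover have "\<forall>t. at R c (t + ?L) = at R c t \<and> at R d (t + ?L) = at R d t"
    using at_period[of R c _ 1] at_period[of R d _ 1] eq by simp
  ultimately show "\<exists>L>0. L \<le> period R \<and>
      (\<forall>t. at R c (t + L) = at R c t \<and> at R d (t + L) = at R d t)"
    by blast
qed

lemma meet_in_window:
  assumes "common_period R Lm" "c \<in> carriers R" "e \<in> carriers R" "meet R c e"
    "Lm \<le> T" "T \<le> Suc u"
  shows "\<exists>j<T. at R c (u-j) = at R e (u-j)"
proof -
  obtain t0 where t0: "at R c t0 = at R e t0" using assms(4) by (auto simp: meet_def)
  obtain L where L: "0 < L" "L \<le> Lm" "\<forall>t. at R c (t+L) = at R c t \<and> at R e (t+L) = at R e t"
    using assms(1-3) unfolding common_period_def by blast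
  obtain j where "j < T" "(at R c (u-j), at R e (u-j)) = (at R c t0, at R e t0)"
    using periodic_window[of "\<lambda>t. (at R c t, at R e t)" L T u t0] L assms(5,6) by auto
  then show ?thesis using t0 by auto
qed

lemma route_in_window:
  assumes "common_period R Lm" "c \<in> carriers R" "Lm \<le> T" "T \<le> Suc u" "x \<in> set (route R c)"
  shows "\<exists>j<T. at R c (u-j) = x"
proof -
  obtain i where i: "i < length (route R c)" "at R c i = x"
    using assms(5) by (auto simp: in_set_conv_nth at_def)
  obtain L where L: "0 < L" "L \<le> Lm" "\<forall>t. at R c (t+L) = at R c t"
    using assms(1,2) unfolding common_period_def by blast
  have "\<And>t. at R c (t + L) = at R c t" using L(3) by blast
  then show ?thesis
    using periodic_window[of "at R c" L T u i] L(1,2) assms(3,4) i(2) by (metis le_trans)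
qed

text \<open>Feasibility through connectivity: a walk realizable from x0 only switches
  between linked carriers, so every site lies on the route of a carrier linked (in several
  steps) to any carrier c0 present at x0 at time 0.\<close>
lemma feasible_linked_routes:
  assumes wf: "pv_wf R" and feas: "feasible R" and x0: "x0 \<in> start R"
    and c0: "c0 \<in> carriers R" "at R c0 0 = x0"
  shows "sites R \<subseteq> (\<Union>c\<in>{c. (linked R)\<^sup>*\<^sup>* c0 c}. set (route R c))"
proof -
  obtain m y where y0: "y 0 = x0"
    and walk: "\<forall>i<m. \<exists>c\<in>carriers R. at R c i = y i \<and> at R c (Suc i) = y (Suc i)"
    and cover: "sites R \<subseteq> y ` {..m}"
    using feas x0 unfolding feasible_def by blast
  obtain cc where cc: "\<And>i. i < m \<Longrightarrow>
      cc i \<in> carriers R \<and> at R (cc i) i = y i \<and> at R (cc i) (Suc i) = y (Suc i)"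
    using walk by metis
  have cc_linked: "(linked R)\<^sup>*\<^sup>* c0 (cc i)" if "i < m" for i
    using that
  proof (induction i)
    case 0
    have "linked R c0 (cc 0)" using cc[OF 0] c0 y0 unfolding linked_def meet_def by metis
    then show ?case by (rule r_into_rtranclp)
  next
    case (Suc i)
    have i: "i < m" using Suc.prems by simp
    have "linked R (cc i) (cc (Suc i))"
      using cc[OF i] cc[OF Suc.prems] unfolding linked_def meet_def by metis
    with Suc.IH[OF i] show ?case by (rule rtranclp.rtrancl_into_rtrancl)
  qed
  have on_route: "\<exists>c. (linked R)\<^sup>*\<^sup>* c0 c \<and> c \<in> carriers R \<and> y j = at R c j" if "j \<le> m" for j
  proof (cases "j < m")
    case True then show ?thesis using cc[OF True] cc_linked[OF True] by metis
  next
    case False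
    show ?thesis
    proof (cases m)
      case 0 then show ?thesis using that y0 c0 by auto
    next
      case (Suc m1)
      then have "j = Suc m1" "m1 < m" using that False by auto
      then show ?thesis using cc[of m1] cc_linked[of m1] by metis
    qed
  qed
  show ?thesis
  proof
    fix x assume "x \<in> sites R"
    then obtain j where j: "j \<le> m" "x = y j" using cover by blast
    then obtain c where "(linked R)\<^sup>*\<^sup>* c0 c" "c \<in> carriers R" "x = at R c j"
      using on_route by blast
    then show "x \<in> (\<Union>c\<in>{c. (linked R)\<^sup>*\<^sup>* c0 c}. set (route R c))"
      using at_in_route[OF _ wf] by blast
  qed
qed

section \<open>The exploration algorithm\<close>

text \<open>The agent explores the graph whose vertices are carriers and whose edges are meetings,
  by depth-first search, under a guess T of a common period.  Every phase starts from
  scratch with the current carrier as root.  Its modes are: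
  Scan d i: ride d for T steps, recording every carrier met (nbrs d);
  Decide d: d is scanned; pick an unvisited recorded neighbour, or backtrack, or restart;
  Seek d e i: ride d for up to T steps until e is met, then switch to e;
  Return d p i: ride d for up to T steps until the parent p is met, then switch back.
  If a wait exceeds T steps, or the search finishes, the phase restarts with guess 2T.
  Independently of this, the agent halts as soon as it has seen all n sites.\<close>
datatype phase = Init | Scan nat nat | Decide nat | Seek nat nat nat | Return nat nat nat

record agent_state =
  mode :: phase
  ride :: nat
  guess :: nat
  visited :: "nat set"
  stack :: "nat list"
  nbrs :: "nat \<Rightarrow> nat set"

fun carrier_of :: "phase \<Rightarrow> nat" where
  "carrier_of Init = 0"
| "carrier_of (Scan d i) = d"
| "carrier_of (Decide d) = d"
| "carrier_of (Seek d e i) = d"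
| "carrier_of (Return d p i) = d"

definition init_state :: agent_state where
  "init_state = \<lparr>mode = Init, ride = 0, guess = 1, visited = {}, stack = [], nbrs = (\<lambda>_. {})\<rparr>"

definition new_phase :: "nat \<Rightarrow> nat \<Rightarrow> agent_state" where
  "new_phase T d = \<lparr>mode = Scan d 0, ride = d, guess = T, visited = {d}, stack = [], nbrs = (\<lambda>_. {})\<rparr>"

definition step_state :: "agent_state \<Rightarrow> obs \<Rightarrow> agent_state" where
  "step_state s ob = (let here = snd ob; T = guess s in case mode s of
     Init \<Rightarrow> new_phase 1 (Min here)
   | Scan d i \<Rightarrow> s\<lparr>mode := (if Suc i < T then Scan d (Suc i) else Decide d), ride := d,
                    nbrs := (nbrs s)(d := nbrs s d \<union> here)\<rparr>
   | Decide d \<Rightarrow>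
       (if \<exists>e. e \<in> nbrs s d \<and> e \<notin> visited s
        then s\<lparr>mode := Seek d (SOME e. e \<in> nbrs s d \<and> e \<notin> visited s) 0, ride := d\<rparr>
        else (case stack s of
                p # _ \<Rightarrow> s\<lparr>mode := Return d p 0, ride := d\<rparr>
              | [] \<Rightarrow> new_phase (2*T) d))
   | Seek d e i \<Rightarrow>
       (if e \<in> here
        then s\<lparr>mode := Scan e 0, ride := e, visited := insert e (visited s), stack := d # stack s\<rparr>
        else if Suc i < T then s\<lparr>mode := Seek d e (Suc i), ride := d\<rparr>
        else new_phase (2*T) d)
   | Return d p i \<Rightarrow>
       (if p \<in> here then s\<lparr>mode := Decide p, ride := p, stack := tl (stack s)\<rparr>
        else if Suc i < T then s\<lparr>mode := Return d p (Suc i), ride := d\<rparr>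
        else new_phase (2*T) d))"

definition explorer :: "nat \<Rightarrow> algorithm" where
  "explorer n h = (if n \<le> card (fst ` set h) then Halt
                   else Ride (ride (foldl step_state init_state h)))"

text \<open>The run of the state machine without the halting test: position and state at time t.\<close>
fun run :: "pvsys \<Rightarrow> nat \<Rightarrow> nat \<Rightarrow> nat \<times> agent_state" where
  "run R x0 0 = (x0, step_state init_state (observe R x0 0))"
| "run R x0 (Suc t) = (let s = snd (run R x0 t); x = at R (ride s) (Suc t)
                        in (x, step_state s (observe R x (Suc t))))"

definition run_pos :: "pvsys \<Rightarrow> nat \<Rightarrow> nat \<Rightarrow> nat" where
  "run_pos R x0 t = fst (run R x0 t)"

abbreviation run_hist :: "pvsys \<Rightarrow> nat \<Rightarrow> nat \<Rightarrow> obs list" where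
  "run_hist R x0 t \<equiv> map (\<lambda>u. observe R (run_pos R x0 u) u) [0..<Suc t]"

lemma foldl_run_hist: "foldl step_state init_state (run_hist R x0 t) = snd (run R x0 t)"
proof (induction t)
  case 0
  then show ?case by (simp add: run_pos_def)
next
  case (Suc t)
  have "[0..<Suc (Suc t)] = [0..<Suc t] @ [Suc t]" by simp
  then show ?case using Suc by (simp add: run_pos_def Let_def del: upt_Suc)
qed

lemma sites_run_hist: "fst ` set (run_hist R x0 t) = run_pos R x0 ` {..t}"
proof -
  have "set [0..<Suc t] = {..t}" by auto
  then have "fst ` set (run_hist R x0 t) = (\<lambda>u. fst (observe R (run_pos R x0 u) u)) ` {..t}"
    by (simp only: list.set_map image_image)
  then show ?thesis by (simp add: observe_def)
qed

lemma hist_explorer: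
  "(\<forall>s<t. card (run_pos R x0 ` {..s}) < n) \<Longrightarrow> hist R (explorer n) x0 t = run_hist R x0 t"
proof (induction t)
  case 0
  then show ?case by (simp add: run_pos_def)
next
  case (Suc t)
  have IH: "hist R (explorer n) x0 t = run_hist R x0 t" using Suc by simp
  have "card (run_pos R x0 ` {..t}) < n" using Suc.prems by simp
  hence ride: "explorer n (run_hist R x0 t) = Ride (ride (snd (run R x0 t)))"
    using sites_run_hist[of R x0 t] foldl_run_hist[of R x0 t] by (simp add: explorer_def)
  have "[0..<Suc (Suc t)] = [0..<Suc t] @ [Suc t]" by simp
  then show ?case using IH ride by (simp add: Let_def run_pos_def del: upt_Suc)
qed

section \<open>Correctness of one run\<close>

text \<open>The invariant maintained by the run of the state machine.  Its parameter Lm is a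
  common period (unknown to the agent); once the guess is at least Lm every scan is
  complete.\<close>
locale exploration =
  fixes R :: pvsys and x0 :: nat and Lm :: nat
  assumes wf: "pv_wf R" and x0: "x0 \<in> start R" and feas: "feasible R"
    and per: "common_period R Lm"
begin

definition pos :: "nat \<Rightarrow> nat" where "pos t = run_pos R x0 t"
definition state :: "nat \<Rightarrow> agent_state" where "state t = snd (run R x0 t)"

definition present :: "nat \<Rightarrow> nat set" where
  "present t = {c \<in> carriers R. at R c t = pos t}"

definition c0 :: nat where "c0 = Min (present 0)"

definition K :: nat where "K = card (carriers R)"

lemma finite_carriers: "finite (carriers R)"
  using wf by (simp add: pv_wf_def)

lemma pos_0: "pos 0 = x0"
  by (simp add: pos_def run_pos_def)

lemma pos_Suc: "pos (Suc t) = at R (ride (state t)) (Suc t)"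
  by (simp add: pos_def state_def run_pos_def Let_def)

lemma state_0: "state 0 = new_phase 1 c0"
  by (simp add: state_def step_state_def init_state_def observe_def c0_def present_def pos_0)

lemma state_Suc: "state (Suc t) = step_state (state t) (pos (Suc t), present (Suc t))"
  by (simp add: pos_def state_def run_pos_def Let_def present_def observe_def)

lemma c0_present: "c0 \<in> present 0"
proof -
  have "present 0 \<noteq> {}" using x0 by (auto simp: start_def present_def pos_0)
  moreover have "finite (present 0)" using finite_carriers by (simp add: present_def)
  ultimately show ?thesis by (simp add: c0_def)
qed

definition explored :: "(nat \<Rightarrow> nat set) \<Rightarrow> nat \<Rightarrow> nat \<Rightarrow> bool" where
  "explored N t v \<longleftrightarrow> (\<forall>e\<in>carriers R. meet R v e \<longrightarrow> e \<in> N v) \<and> set (route R v) \<subseteq> pos ` {..t}"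

lemma explored_mono: "explored N t v \<Longrightarrow> N v \<subseteq> N' v \<Longrightarrow> t \<le> t' \<Longrightarrow> explored N' t' v"
  unfolding explored_def by auto

text \<open>What the last i steps of the current mode guarantee.\<close>
definition mode_inv :: "nat \<Rightarrow> nat \<Rightarrow> nat set \<Rightarrow> nat list \<Rightarrow> (nat \<Rightarrow> nat set) \<Rightarrow> phase \<Rightarrow> bool"
  where
  "mode_inv t T V S N m = (case m of
     Init \<Rightarrow> False
   | Scan d i \<Rightarrow> i < T \<and> i \<le> t \<and> (\<forall>j<i. pos (t-j) = at R d (t-j) \<and> present (t-j) \<subseteq> N d)
   | Decide d \<Rightarrow> True
   | Seek d e i \<Rightarrow> i < T \<and> i \<le> t \<and> e \<in> N d \<and> e \<notin> V \<and> (\<forall>j<i. at R e (t-j) \<noteq> at R d (t-j))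
   | Return d p i \<Rightarrow> i < T \<and> i \<le> t \<and> S \<noteq> [] \<and> hd S = p \<and> N d \<subseteq> V
        \<and> (\<forall>j<i. at R p (t-j) \<noteq> at R d (t-j)))"

definition invariant :: "nat \<Rightarrow> agent_state \<Rightarrow> bool" where
  "invariant t s \<longleftrightarrow> (let d = carrier_of (mode s) in
     ride s = d \<and> d \<in> carriers R \<and> at R d t = pos t \<and>
     finite (visited s) \<and> visited s \<subseteq> carriers R \<and> d \<in> visited s \<and>
     set (stack s) \<subseteq> visited s \<and>
     (\<exists>a. guess s = 2^a) \<and>
     (\<forall>v e. e \<in> nbrs s v \<longrightarrow> e \<in> carriers R \<and> meet R v e) \<and>
     chain R (d # stack s) \<and>
     (\<forall>v\<in>visited s - set (d # stack s). nbrs s v \<subseteq> visited s) \<and>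
     (Lm \<le> guess s \<longrightarrow> (\<forall>v\<in>visited s. (\<exists>i. mode s = Scan v i) \<or> explored (nbrs s) t v)) \<and>
     (linked R)\<^sup>*\<^sup>* c0 d \<and>
     mode_inv t (guess s) (visited s) (stack s) (nbrs s) (mode s))"

lemma invariantD:
  assumes "invariant t s"
  shows inv_ride: "ride s = carrier_of (mode s)"
    and inv_carrier: "carrier_of (mode s) \<in> carriers R"
    and inv_located: "at R (carrier_of (mode s)) t = pos t"
    and inv_finite: "finite (visited s)"
    and inv_visited: "visited s \<subseteq> carriers R"
    and inv_current: "carrier_of (mode s) \<in> visited s"
    and inv_stack: "set (stack s) \<subseteq> visited s"
    and inv_guess: "\<exists>a. guess s = 2^a"
    and inv_nbrs: "\<forall>v e. e \<in> nbrs s v \<longrightarrow> e \<in> carriers R \<and> meet R v e"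
    and inv_chain: "chain R (carrier_of (mode s) # stack s)"
    and inv_closed: "\<forall>v\<in>visited s - set (carrier_of (mode s) # stack s). nbrs s v \<subseteq> visited s"
    and inv_explored:
      "Lm \<le> guess s \<longrightarrow> (\<forall>v\<in>visited s. (\<exists>i. mode s = Scan v i) \<or> explored (nbrs s) t v)"
    and inv_linked: "(linked R)\<^sup>*\<^sup>* c0 (carrier_of (mode s))"
    and inv_mode: "mode_inv t (guess s) (visited s) (stack s) (nbrs s) (mode s)"
  using assms unfolding invariant_def Let_def by auto

lemma invariantI:
  assumes "ride s = d" "carrier_of (mode s) = d" "d \<in> carriers R" "at R d t = pos t"
    "finite (visited s)" "visited s \<subseteq> carriers R" "d \<in> visited s" "set (stack s) \<subseteq> visited s"
    "\<exists>a. guess s = 2^a" "\<forall>v e. e \<in> nbrs s v \<longrightarrow> e \<in> carriers R \<and> meet R v e"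
    "chain R (d # stack s)" "\<forall>v\<in>visited s - set (d # stack s). nbrs s v \<subseteq> visited s"
    "Lm \<le> guess s \<longrightarrow> (\<forall>v\<in>visited s. (\<exists>i. mode s = Scan v i) \<or> explored (nbrs s) t v)"
    "(linked R)\<^sup>*\<^sup>* c0 d" "mode_inv t (guess s) (visited s) (stack s) (nbrs s) (mode s)"
  shows "invariant t s"
  using assms unfolding invariant_def Let_def by simp

lemma invariant_0: "invariant 0 (state 0)"
  using c0_present
  by (auto simp: invariant_def state_0 new_phase_def mode_inv_def present_def pos_0
           intro: exI[of _ 0])

lemma pos_Suc_current:
  "invariant t (state t) \<Longrightarrow> pos (Suc t) = at R (carrier_of (mode (state t))) (Suc t)"
  using inv_ride pos_Suc by simp

lemma present_Suc:
  "invariant t (state t) \<Longrightarrow>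
   present (Suc t) = {c \<in> carriers R. at R c (Suc t) = at R (carrier_of (mode (state t))) (Suc t)}"
  using pos_Suc_current by (simp add: present_def)

lemma present_Suc_meets:
  assumes I: "invariant t (state t)" and e: "e \<in> present (Suc t)"
  shows "e \<in> carriers R \<and> meet R (carrier_of (mode (state t))) e"
  using e present_Suc[OF I] unfolding meet_def by (auto intro!: exI[of _ "Suc t"])

lemma scan_explores:
  assumes "d \<in> carriers R" "Lm \<le> T" "T \<le> Suc u"
    "\<forall>j<T. pos (u-j) = at R d (u-j) \<and> present (u-j) \<subseteq> N d"
  shows "explored N u d"
  unfolding explored_def
proof (intro conjI ballI impI subsetI)
  fix e assume e: "e \<in> carriers R" "meet R d e"
  obtain j where j: "j < T" "at R d (u-j) = at R e (u-j)"
    using meet_in_window[OF per assms(1) e assms(2,3)] by blast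
  then have "e \<in> present (u-j)" using e(1) assms(4) by (simp add: present_def)
  then show "e \<in> N d" using j(1) assms(4) by blast
next
  fix x assume "x \<in> set (route R d)"
  then obtain j where "j < T" "at R d (u-j) = x" using route_in_window[OF per assms(1-3)] by blast
  then show "x \<in> pos ` {..u}" using assms(4) by (metis atMost_iff diff_le_self image_eqI)
qed

lemma wait_succeeds:
  assumes "d \<in> carriers R" "e \<in> carriers R" "meet R d e" "Lm \<le> T" "T \<le> Suc u"
    and "\<forall>j<T. at R e (u - j) \<noteq> at R d (u - j)"
  shows False
  using meet_in_window[OF per assms(1-5)] assms(6) by force

lemma window_Suc: "(\<forall>j<i. P (t - j)) \<Longrightarrow> P (Suc t) \<Longrightarrow> \<forall>j<Suc i. P (Suc t - j)"
  by (auto simp: less_Suc_eq_0_disj)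

text \<open>The potential of a state within a phase: it is at least 1 and strictly decreases at
  every step that does not start a new phase.  Every carrier still to be visited is worth
  3T+2, enough for its Seek, its scan and the later Return to its parent, each of which
  may last T steps; every stack entry is worth the T+1 steps of that Return.\<close>
definition mode_potential :: "nat \<Rightarrow> phase \<Rightarrow> int" where
  "mode_potential T m = (case m of Scan d i \<Rightarrow> int T - int i + 2 | Decide d \<Rightarrow> 2
     | Seek d e i \<Rightarrow> 1 - int i | Return d p i \<Rightarrow> 1 - int i | Init \<Rightarrow> 0)"

definition potential :: "agent_state \<Rightarrow> int" where
  "potential s = (3 * int (guess s) + 2) * (int K - int (card (visited s)))
     + (int (guess s) + 1) * int (length (stack s)) + mode_potential (guess s) (mode s)"

definition phase_restart :: "nat \<Rightarrow> bool" where
  "phase_restart t \<longleftrightarrow> state (Suc t) = new_phase (2 * guess (state t)) (carrier_of (mode (state t)))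
     \<and> (Lm \<le> guess (state t) \<longrightarrow> sites R \<subseteq> pos ` {..t})"

definition progress :: "nat \<Rightarrow> bool" where
  "progress t \<longleftrightarrow> (guess (state (Suc t)) = guess (state t) \<and> potential (state (Suc t)) < potential (state t))
     \<or> phase_restart t"

lemma new_phase_invariant:
  assumes "d \<in> carriers R" "at R d u = pos u" "\<exists>a. T = 2^a" "(linked R)\<^sup>*\<^sup>* c0 d"
  shows "invariant u (new_phase (2*T) d)"
proof -
  obtain a where "T = 2^a" using assms(3) by blast
  hence "2*T = 2^(Suc a)" "0 < 2*T" by simp_all
  hence "\<exists>a. 2*T = 2^a" "0 < 2*T" by blast+
  then show ?thesis using assms
    by (intro invariantI[where d=d]) (simp_all add: new_phase_def mode_inv_def)
qed

lemma wait_invariant: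
  assumes I: "invariant t s" and d: "carrier_of (mode s) = d" and not_scan: "\<forall>v i. mode s \<noteq> Scan v i"
    and next_pos: "at R d (Suc t) = pos (Suc t)"
    and m': "carrier_of m' = d" "\<forall>v i. m' \<noteq> Scan v i"
    and mi': "mode_inv (Suc t) (guess s) (visited s) (stack s) (nbrs s) m'"
  shows "invariant (Suc t) (s\<lparr>mode := m', ride := d\<rparr>)"
proof -
  have "Lm \<le> guess s \<longrightarrow> (\<forall>v\<in>visited s. explored (nbrs s) (Suc t) v)"
    using inv_explored[OF I] not_scan explored_mono[of "nbrs s" t _ "nbrs s" "Suc t"] by auto
  then show ?thesis
    using invariantD[OF I] d m' mi' next_pos by (intro invariantI[where d=d]) simp_all
qed

lemma restart_step:
  assumes I: "invariant t (state t)"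
    and s': "state (Suc t) = new_phase (2 * guess (state t)) (carrier_of (mode (state t)))"
    and complete: "Lm \<le> guess (state t) \<Longrightarrow> sites R \<subseteq> pos ` {..t}"
  shows "invariant (Suc t) (state (Suc t)) \<and> progress t"
proof -
  have "invariant (Suc t) (state (Suc t))"
    unfolding s' using pos_Suc_current[OF I, symmetric]
    by (rule new_phase_invariant[OF inv_carrier[OF I] _ inv_guess[OF I] inv_linked[OF I]])
  then show ?thesis using s' complete by (simp add: progress_def phase_restart_def)
qed

lemma scan_step_explored:
  assumes I: "invariant t (state t)" and m: "mode (state t) = Scan d i"
    and L: "Lm \<le> guess (state t)" and grow: "\<forall>v. nbrs (state t) v \<subseteq> N' v"
    and win: "\<forall>j<Suc i. pos (Suc t - j) = at R d (Suc t - j) \<and> present (Suc t - j) \<subseteq> N' d"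
    and v: "v \<in> visited (state t)"
  shows "(v = d \<and> Suc i < guess (state t)) \<or> explored N' (Suc t) v"
proof (cases "v = d")
  case True
  show ?thesis
  proof (cases "Suc i < guess (state t)")
    case False
    text \<open>The scan of d is finished and covered guess \<ge> Lm consecutive times.\<close>
    have mi: "i < guess (state t)" "i \<le> t" using inv_mode[OF I] by (simp_all add: mode_inv_def m)
    then have T: "guess (state t) = Suc i" using False by simp
    have d: "d \<in> carriers R" using inv_carrier[OF I] m by simp
    have "guess (state t) \<le> Suc (Suc t)" using T mi(2) by simp
    then have "explored N' (Suc t) d" using scan_explores[OF d L] win unfolding T by blast
    then show ?thesis using True by simp
  qed (use True in simp)
next
  case False
  then have "explored (nbrs (state t)) t v" using inv_explored[OF I] L v by (auto simp: m)
  then have "explored N' (Suc t) v" by (rule explored_mono) (use grow in auto)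
  then show ?thesis ..
qed

lemma step_Scan:
  assumes I: "invariant t (state t)" and m: "mode (state t) = Scan d i"
  shows "invariant (Suc t) (state (Suc t)) \<and> progress t"
proof -
  let ?s = "state t"
  let ?T = "guess ?s" and ?V = "visited ?s" and ?S = "stack ?s" and ?N = "nbrs ?s"
  have d: "d \<in> carriers R" using inv_carrier[OF I] m by simp
  have mi: "i < ?T" "i \<le> t" "\<forall>j<i. pos (t-j) = at R d (t-j) \<and> present (t-j) \<subseteq> ?N d"
    using inv_mode[OF I] by (simp_all add: mode_inv_def m)
  have next_pos: "pos (Suc t) = at R d (Suc t)" using pos_Suc_current[OF I] m by simp
  define N' where "N' = ?N(d := ?N d \<union> present (Suc t))"
  have s': "state (Suc t) =
      ?s\<lparr>mode := (if Suc i < ?T then Scan d (Suc i) else Decide d), ride := d, nbrs := N'\<rparr>"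
    by (simp add: state_Suc step_state_def m N'_def)
  have win: "\<forall>j<Suc i. pos (Suc t - j) = at R d (Suc t - j) \<and> present (Suc t - j) \<subseteq> N' d"
  proof (rule window_Suc)
    show "\<forall>j<i. pos (t-j) = at R d (t-j) \<and> present (t-j) \<subseteq> N' d" using mi(3) by (auto simp: N'_def)
    show "pos (Suc t) = at R d (Suc t) \<and> present (Suc t) \<subseteq> N' d" using next_pos by (auto simp: N'_def)
  qed
  have nbrs': "\<forall>v e. e \<in> N' v \<longrightarrow> e \<in> carriers R \<and> meet R v e"
    using inv_nbrs[OF I] present_Suc_meets[OF I] m by (auto simp: N'_def)
  have closed': "\<forall>v\<in>?V - set (d # ?S). N' v \<subseteq> ?V"
    using inv_closed[OF I] m by (auto simp: N'_def)
  have grow: "\<forall>v. ?N v \<subseteq> N' v" by (simp add: N'_def)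
  have explored': "Lm \<le> ?T \<longrightarrow>
      (\<forall>v\<in>?V. (\<exists>i'. mode (state (Suc t)) = Scan v i') \<or> explored N' (Suc t) v)"
  proof (intro impI ballI)
    fix v assume "Lm \<le> ?T" "v \<in> ?V"
    then show "(\<exists>i'. mode (state (Suc t)) = Scan v i') \<or> explored N' (Suc t) v"
      using scan_step_explored[OF I m _ grow win] by (auto simp: s')
  qed
  have mode': "mode_inv (Suc t) ?T ?V ?S N' (mode (state (Suc t)))"
    using win mi(2) unfolding mode_inv_def s' by simp
  have inv: "invariant (Suc t) (state (Suc t))"
    using invariantD[OF I] m nbrs' closed' explored' mode' next_pos
    by (intro invariantI[where d=d]) (simp_all add: s')
  have "mode_potential ?T (mode (state (Suc t))) < mode_potential ?T (mode ?s)"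
    using mi(1) unfolding s' mode_potential_def m by auto
  then have "potential (state (Suc t)) < potential ?s"
    unfolding potential_def by (simp add: s')
  then show ?thesis using inv by (simp add: progress_def s')
qed

text \<open>When the search of a phase is over and the guess was at least Lm, every carrier
  linked to c0 has been explored, hence, by feasibility, every site has been visited.\<close>
lemma search_complete:
  assumes I: "invariant t s" and m: "mode s = Decide d"
    and no_new: "\<forall>e. e \<in> nbrs s d \<longrightarrow> e \<in> visited s" and S: "stack s = []" and L: "Lm \<le> guess s"
  shows "sites R \<subseteq> pos ` {..t}"
proof -
  let ?V = "visited s"
  have full: "\<forall>v\<in>?V. explored (nbrs s) t v" using inv_explored[OF I] L m by auto
  have closed: "e \<in> ?V" if "linked R v e" "v \<in> ?V" for v e
  proof -
    have "e \<in> nbrs s v" using full that unfolding explored_def linked_def by blast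
    moreover have "nbrs s v \<subseteq> ?V"
      using no_new inv_closed[OF I] S m that(2) by (cases "v = d") auto
    ultimately show ?thesis by blast
  qed
  have reach: "b \<in> ?V" if "(linked R)\<^sup>*\<^sup>* a b" "a \<in> ?V" for a b
    using that by (induction rule: rtranclp_induct) (auto intro: closed)
  have "((linked R)\<inverse>\<inverse>)\<^sup>*\<^sup>* d c0"
    using inv_linked[OF I] m by (simp add: rtranclp_conversep)
  then have "c0 \<in> ?V" using reach inv_current[OF I] m by (simp add: linked_sym)
  then have "set (route R c) \<subseteq> pos ` {..t}" if "(linked R)\<^sup>*\<^sup>* c0 c" for c
    using full reach[OF that] unfolding explored_def by blast
  moreover have "sites R \<subseteq> (\<Union>c\<in>{c. (linked R)\<^sup>*\<^sup>* c0 c}. set (route R c))"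
    using feasible_linked_routes[OF wf feas x0] c0_present by (simp add: present_def pos_0)
  ultimately show ?thesis by blast
qed

lemma step_Decide:
  assumes I: "invariant t (state t)" and m: "mode (state t) = Decide d"
  shows "invariant (Suc t) (state (Suc t)) \<and> progress t"
proof -
  let ?s = "state t"
  have next_pos: "at R d (Suc t) = pos (Suc t)" using pos_Suc_current[OF I] m by simp
  have T: "0 < guess ?s" using inv_guess[OF I] by auto
  have wait: "invariant (Suc t) (?s\<lparr>mode := m', ride := d\<rparr>)"
    if "carrier_of m' = d" "\<forall>v i. m' \<noteq> Scan v i"
      "mode_inv (Suc t) (guess ?s) (visited ?s) (stack ?s) (nbrs ?s) m'" for m'
    using wait_invariant[OF I _ _ next_pos that] m by simp
  show ?thesis
  proof (cases "\<exists>e. e \<in> nbrs ?s d \<and> e \<notin> visited ?s")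
    case True
    define e where "e = (SOME e. e \<in> nbrs ?s d \<and> e \<notin> visited ?s)"
    have e: "e \<in> nbrs ?s d" "e \<notin> visited ?s" using someI_ex[OF True] unfolding e_def by auto
    have s': "state (Suc t) = ?s\<lparr>mode := Seek d e 0, ride := d\<rparr>"
      using True by (simp add: state_Suc step_state_def m e_def)
    have "invariant (Suc t) (state (Suc t))"
      unfolding s' using e T by (intro wait) (simp_all add: mode_inv_def)
    moreover have "potential (state (Suc t)) < potential ?s"
      unfolding potential_def s' by (simp add: m mode_potential_def)
    ultimately show ?thesis by (simp add: progress_def s')
  next
    case False
    show ?thesis
    proof (cases "stack ?s")
      case (Cons p S0)
      have s': "state (Suc t) = ?s\<lparr>mode := Return d p 0, ride := d\<rparr>"
        using False Cons by (simp add: state_Suc step_state_def m)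
      have "invariant (Suc t) (state (Suc t))"
        unfolding s' using False Cons T by (intro wait) (auto simp: mode_inv_def)
      moreover have "potential (state (Suc t)) < potential ?s"
        unfolding potential_def s' by (simp add: m mode_potential_def)
      ultimately show ?thesis by (simp add: progress_def s')
    next
      case Nil
      have s': "state (Suc t) = new_phase (2 * guess ?s) d"
        using False Nil by (auto simp: state_Suc step_state_def m)
      show ?thesis
        using restart_step[OF I] s' search_complete[OF I m _ Nil] False m by auto
    qed
  qed
qed


text \<open>Seek succeeds: the agent switches to e, pushes d and starts scanning e.  Visiting
  the new carrier e pays for the push and the new scan.\<close>
lemma seek_found:
  assumes I: "invariant t (state t)" and m: "mode (state t) = Seek d e i"
    and found: "e \<in> present (Suc t)"
  shows "invariant (Suc t) (state (Suc t)) \<and> progress t"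
proof -
  let ?s = "state t"
  let ?T = "guess ?s" and ?V = "visited ?s" and ?S = "stack ?s" and ?N = "nbrs ?s"
  have d: "d \<in> carriers R" using inv_carrier[OF I] m by simp
  have mi: "i < ?T" "e \<in> ?N d" "e \<notin> ?V" using inv_mode[OF I] by (simp_all add: mode_inv_def m)
  have e: "e \<in> carriers R" and meet_de: "meet R d e" using inv_nbrs[OF I] mi(2) by auto
  have s': "state (Suc t) = ?s\<lparr>mode := Scan e 0, ride := e, visited := insert e ?V, stack := d # ?S\<rparr>"
    using found by (simp add: state_Suc step_state_def m)
  have e_pos: "at R e (Suc t) = pos (Suc t)" using found by (simp add: present_def)
  have "meet R e d" using meet_de meet_sym by blast
  then have chain': "chain R (e # d # ?S)" using inv_chain[OF I] m by simp
  have linked': "(linked R)\<^sup>*\<^sup>* c0 e"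
    using inv_linked[OF I] d e meet_de m by (auto simp: linked_def intro: rtranclp.rtrancl_into_rtrancl)
  have explored': "Lm \<le> ?T \<longrightarrow>
      (\<forall>v\<in>insert e ?V. (\<exists>i. Scan e 0 = Scan v i) \<or> explored ?N (Suc t) v)"
    using inv_explored[OF I] m explored_mono[of ?N t _ ?N "Suc t"] by auto
  have inv: "invariant (Suc t) (state (Suc t))"
    using invariantD[OF I] m e e_pos chain' linked' explored' mi(1)
    by (intro invariantI[where d=e]) (auto simp: s' mode_inv_def)
  have card': "card (insert e ?V) = card ?V + 1" using inv_finite[OF I] mi(3) by simp
  define a where "a = int (card ?V)"
  define l where "l = int (length ?S)"
  define T where "T = int ?T"
  have "potential (state (Suc t)) = (3*T+2)*(int K - (a+1)) + (T+1)*(l+1) + (T + 2)"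
    unfolding potential_def s' a_def l_def T_def mode_potential_def
    by (simp add: card' algebra_simps)
  also have "\<dots> < (3*T+2)*(int K - a) + (T+1)*l + 1 - int i"
    using mi(1) T_def by (simp add: algebra_simps)
  also have "\<dots> = potential ?s" unfolding potential_def a_def l_def T_def mode_potential_def m by simp
  finally show ?thesis using inv by (simp add: progress_def s')
qed

lemma step_Seek:
  assumes I: "invariant t (state t)" and m: "mode (state t) = Seek d e i"
  shows "invariant (Suc t) (state (Suc t)) \<and> progress t"
proof (cases "e \<in> present (Suc t)")
  case True
  then show ?thesis by (rule seek_found[OF I m])
next
  case False
  let ?s = "state t"
  let ?T = "guess ?s"
  have d: "d \<in> carriers R" using inv_carrier[OF I] m by simp
  have next_pos: "at R d (Suc t) = pos (Suc t)" using pos_Suc_current[OF I] m by simp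
  have mi: "i < ?T" "i \<le> t" "e \<in> nbrs ?s d" "e \<notin> visited ?s" "\<forall>j<i. at R e (t-j) \<noteq> at R d (t-j)"
    using inv_mode[OF I] by (simp_all add: mode_inv_def m)
  have e: "e \<in> carriers R" and meet_de: "meet R d e" using inv_nbrs[OF I] mi(3) by auto
  have "at R e (Suc t) \<noteq> at R d (Suc t)" using False present_Suc[OF I] m e by auto
  then have missed: "\<forall>j<Suc i. at R e (Suc t - j) \<noteq> at R d (Suc t - j)"
    using window_Suc[of i "\<lambda>u. at R e u \<noteq> at R d u"] mi(5) by blast
  show ?thesis
  proof (cases "Suc i < ?T")
    case True
    have s': "state (Suc t) = ?s\<lparr>mode := Seek d e (Suc i), ride := d\<rparr>"
      using True False by (simp add: state_Suc step_state_def m)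
    have "invariant (Suc t) (state (Suc t))"
      unfolding s' using wait_invariant[OF I _ _ next_pos] m mi True missed
      by (simp add: mode_inv_def)
    moreover have "potential (state (Suc t)) < potential ?s"
      unfolding potential_def s' by (simp add: m mode_potential_def)
    ultimately show ?thesis by (simp add: progress_def s')
  next
    case timeout: False
    have s': "state (Suc t) = new_phase (2 * ?T) d"
      using False timeout by (simp add: state_Suc step_state_def m)
    have "\<not> Lm \<le> ?T"
    proof
      assume "Lm \<le> ?T"
      moreover have "?T = Suc i" using timeout mi(1) by simp
      ultimately show False using wait_succeeds[OF d e meet_de, of ?T "Suc t"] mi(2) missed by simp
    qed
    then show ?thesis using restart_step[OF I] s' m by simp
  qed
qed

lemma return_found:
  assumes I: "invariant t (state t)" and m: "mode (state t) = Return d p i"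
    and found: "p \<in> present (Suc t)"
  shows "invariant (Suc t) (state (Suc t)) \<and> progress t"
proof -
  let ?s = "state t"
  let ?T = "guess ?s" and ?V = "visited ?s" and ?S = "stack ?s" and ?N = "nbrs ?s"
  have d: "d \<in> carriers R" using inv_carrier[OF I] m by simp
  have mi: "i < ?T" "?S \<noteq> []" "hd ?S = p" "?N d \<subseteq> ?V"
    using inv_mode[OF I] by (simp_all add: mode_inv_def m)
  obtain S0 where S0: "?S = p # S0" using mi(2,3) by (cases ?S) auto
  have p: "p \<in> carriers R" using inv_visited[OF I] inv_stack[OF I] S0 by auto
  have meet_dp: "meet R d p" using inv_chain[OF I] m S0 by simp
  have s': "state (Suc t) = ?s\<lparr>mode := Decide p, ride := p, stack := S0\<rparr>"
    using found S0 by (simp add: state_Suc step_state_def m)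
  have p_pos: "at R p (Suc t) = pos (Suc t)" using found by (simp add: present_def)
  have linked': "(linked R)\<^sup>*\<^sup>* c0 p"
    using inv_linked[OF I] d p meet_dp m by (auto simp: linked_def intro: rtranclp.rtrancl_into_rtrancl)
  have closed': "\<forall>v\<in>?V - set (p # S0). ?N v \<subseteq> ?V"
    using inv_closed[OF I] m S0 mi(4) by auto
  have explored': "Lm \<le> ?T \<longrightarrow> (\<forall>v\<in>?V. (\<exists>i. Decide p = Scan v i) \<or> explored ?N (Suc t) v)"
    using inv_explored[OF I] m explored_mono[of ?N t _ ?N "Suc t"] by auto
  have inv: "invariant (Suc t) (state (Suc t))"
    using invariantD[OF I] m S0 p p_pos linked' closed' explored'
    by (intro invariantI[where d=p]) (auto simp: s' mode_inv_def)
  define a where "a = int (card ?V)"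
  define l where "l = int (length S0)"
  define T where "T = int ?T"
  have "potential (state (Suc t)) = (3*T+2)*(int K - a) + (T+1)*l + 2"
    unfolding potential_def s' a_def l_def T_def mode_potential_def by simp
  also have "\<dots> < (3*T+2)*(int K - a) + (T+1)*(l+1) + 1 - int i"
    using mi(1) T_def by (simp add: algebra_simps)
  also have "\<dots> = potential ?s" unfolding potential_def a_def l_def T_def mode_potential_def m S0 by simp
  finally show ?thesis using inv by (simp add: progress_def s')
qed

text \<open>Return: found, keep waiting, or give up after T steps, impossible when the guess is
  at least Lm since consecutive stack entries meet.\<close>
lemma step_Return:
  assumes I: "invariant t (state t)" and m: "mode (state t) = Return d p i"
  shows "invariant (Suc t) (state (Suc t)) \<and> progress t"
proof (cases "p \<in> present (Suc t)")
  case True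
  then show ?thesis by (rule return_found[OF I m])
next
  case False
  let ?s = "state t"
  let ?T = "guess ?s"
  have d: "d \<in> carriers R" using inv_carrier[OF I] m by simp
  have next_pos: "at R d (Suc t) = pos (Suc t)" using pos_Suc_current[OF I] m by simp
  have mi: "i < ?T" "i \<le> t" "stack ?s \<noteq> []" "hd (stack ?s) = p" "nbrs ?s d \<subseteq> visited ?s"
    "\<forall>j<i. at R p (t-j) \<noteq> at R d (t-j)"
    using inv_mode[OF I] by (simp_all add: mode_inv_def m)
  obtain S0 where S0: "stack ?s = p # S0" using mi(3,4) by (cases "stack ?s") auto
  have p: "p \<in> carriers R" using inv_visited[OF I] inv_stack[OF I] S0 by auto
  have meet_dp: "meet R d p" using inv_chain[OF I] m S0 by simp
  have "at R p (Suc t) \<noteq> at R d (Suc t)" using False present_Suc[OF I] m p by auto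
  then have missed: "\<forall>j<Suc i. at R p (Suc t - j) \<noteq> at R d (Suc t - j)"
    using window_Suc[of i "\<lambda>u. at R p u \<noteq> at R d u"] mi(6) by blast
  show ?thesis
  proof (cases "Suc i < ?T")
    case True
    have s': "state (Suc t) = ?s\<lparr>mode := Return d p (Suc i), ride := d\<rparr>"
      using True False by (simp add: state_Suc step_state_def m)
    have "invariant (Suc t) (state (Suc t))"
      unfolding s' using wait_invariant[OF I _ _ next_pos] m mi True missed
      by (simp add: mode_inv_def)
    moreover have "potential (state (Suc t)) < potential ?s"
      unfolding potential_def s' by (simp add: m mode_potential_def)
    ultimately show ?thesis by (simp add: progress_def s')
  next
    case timeout: False
    have s': "state (Suc t) = new_phase (2 * ?T) d"
      using False timeout by (simp add: state_Suc step_state_def m)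
    have "\<not> Lm \<le> ?T"
    proof
      assume "Lm \<le> ?T"
      moreover have "?T = Suc i" using timeout mi(1) by simp
      ultimately show False using wait_succeeds[OF d p meet_dp, of ?T "Suc t"] mi(2) missed by simp
    qed
    then show ?thesis using restart_step[OF I] s' m by simp
  qed
qed

lemma invariant_step:
  assumes I: "invariant t (state t)"
  shows "invariant (Suc t) (state (Suc t)) \<and> progress t"
proof (cases "mode (state t)")
  case Init
  then show ?thesis using inv_mode[OF I] by (simp add: mode_inv_def)
qed (use step_Scan[OF I] step_Decide[OF I] step_Seek[OF I] step_Return[OF I] in auto)

lemma invariant_always: "invariant t (state t)"
  by (induction t) (use invariant_0 invariant_step in auto)

section \<open>Cost of a run\<close>

lemma Lm_pos: "1 \<le> Lm"
proof -
  have "c0 \<in> carriers R" using c0_present by (simp add: present_def)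
  then show ?thesis using per unfolding common_period_def by fastforce
qed

text \<open>Within a phase the potential never drops below 1: a pending Seek has an unvisited
  target, a pending Return has a non-empty stack.\<close>
lemma potential_pos:
  assumes I: "invariant t s"
  shows "1 \<le> potential s"
proof -
  have "card (visited s) \<le> K"
    using inv_visited[OF I] finite_carriers unfolding K_def by (rule card_mono[rotated])
  moreover define a where "a = int (card (visited s))"
  moreover define l where "l = int (length (stack s))"
  moreover define T where "T = int (guess s)"
  ultimately have K_a: "0 \<le> int K - a" by simp
  have P: "potential s = (3*T+2)*(int K - a) + (T+1)*l + mode_potential (guess s) (mode s)"
    unfolding potential_def a_def l_def T_def by simp
  have nn1: "0 \<le> (3*T+2)*(int K - a)" using K_a T_def by simp
  have nn2: "0 \<le> (T+1)*l" using T_def l_def by simp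
  show ?thesis
  proof (cases "mode s")
    case Init then show ?thesis using inv_mode[OF I] by (simp add: mode_inv_def)
  next
    case (Scan d i)
    then have "i < guess s" using inv_mode[OF I] by (simp add: mode_inv_def)
    then show ?thesis using P nn1 nn2 Scan by (simp add: mode_potential_def)
  next
    case (Decide d)
    then show ?thesis using P nn1 nn2 by (simp add: mode_potential_def)
  next
    case (Seek d e i)
    then have mi: "i < guess s" "e \<in> nbrs s d" "e \<notin> visited s"
      using inv_mode[OF I] by (simp_all add: mode_inv_def)
    have "visited s \<subset> carriers R" using mi inv_nbrs[OF I] inv_visited[OF I] by blast
    then have "card (visited s) < K"
      unfolding K_def using finite_carriers by (rule psubset_card_mono[rotated])
    then have "3*T+2 \<le> (3*T+2)*(int K - a)" using a_def T_def by simp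
    moreover have "mode_potential (guess s) (mode s) = 1 - int i"
      using Seek by (simp add: mode_potential_def)
    ultimately show ?thesis using P nn2 mi(1) T_def by linarith
  next
    case (Return d p i)
    then have mi: "i < guess s" "stack s \<noteq> []" using inv_mode[OF I] by (simp_all add: mode_inv_def)
    then have "1 \<le> l" using l_def by (cases "stack s") auto
    then have "T+1 \<le> (T+1)*l" using T_def by simp
    moreover have "mode_potential (guess s) (mode s) = 1 - int i"
      using Return by (simp add: mode_potential_def)
    ultimately show ?thesis using P nn1 mi(1) T_def by linarith
  qed
qed

lemma potential_new_phase:
  assumes "1 \<le> T"
  shows "potential (new_phase T d) \<le> 5 * int K * int T"
proof -
  have "potential (new_phase T d) = (3*int T+2)*(int K - 1) + int T + 2"
    by (simp add: potential_def new_phase_def mode_potential_def)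
  also have "\<dots> = (3*int T+2)*int K - 2*int T" by (simp add: algebra_simps)
  also have "\<dots> \<le> 5 * int K * int T"
    using mult_left_mono[of 1 "int T" "int K"] assms by (simp add: algebra_simps)
  finally show ?thesis .
qed

text \<open>The budget for a final guess TS: the potential of the current phase plus what the
  later phases, up to guess TS, may cost.  Until all sites are visited it drops at every step.\<close>
definition budget :: "nat \<Rightarrow> nat \<Rightarrow> int" where
  "budget TS t = potential (state t) + 10 * int K * (int TS - int (guess (state t)))"

lemma budget_decreases:
  assumes TS: "TS = 2^J" "Lm \<le> TS" and guess: "guess (state t) \<le> TS"
    and unseen: "\<not> sites R \<subseteq> pos ` {..t}"
  shows "guess (state (Suc t)) \<le> TS \<and> budget TS (Suc t) < budget TS t"
proof -
  let ?T = "guess (state t)"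
  have I: "invariant t (state t)" by (rule invariant_always)
  have "progress t" using invariant_step[OF I] by blast
  then consider "guess (state (Suc t)) = ?T" "potential (state (Suc t)) < potential (state t)"
    | "phase_restart t" unfolding progress_def by blast
  then show ?thesis
  proof cases
    case 1
    then show ?thesis using guess by (simp add: budget_def)
  next
    case 2
    then have s': "state (Suc t) = new_phase (2 * ?T) (carrier_of (mode (state t)))"
      and small: "?T \<noteq> TS" using unseen TS(2) by (auto simp: phase_restart_def)
    obtain a where a: "?T = 2^a" using inv_guess[OF I] by blast
    have doubled: "2 * ?T \<le> TS"
      using double_pow2_le[OF a] small guess TS(1) by simp
    have "potential (state (Suc t)) \<le> 5 * int K * int (2 * ?T)"
      unfolding s' by (rule potential_new_phase) (use a in simp)
    then have "budget TS (Suc t) \<le> 10 * int K * (int TS - int ?T)"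
      by (simp add: budget_def s' new_phase_def algebra_simps)
    also have "\<dots> < budget TS t"
      using potential_pos[OF I] by (simp add: budget_def)
    finally show ?thesis using doubled by (simp add: s' new_phase_def)
  qed
qed

lemma covered_within: "\<exists>t \<le> 20 * K * Lm. sites R \<subseteq> pos ` {..t}"
proof -
  obtain J where J: "Lm \<le> 2^J" "2^J \<le> 2*Lm" using pow2_bracket[OF Lm_pos] by blast
  define TS where "TS = (2::nat)^J"
  have guess_0: "guess (state 0) = 1" by (simp add: state_0 new_phase_def)
  have claim: "sites R \<subseteq> pos ` {..t} \<or> (guess (state t) \<le> TS \<and> budget TS t + int t \<le> budget TS 0)"
    for t
  proof (induction t)
    case 0 then show ?case using guess_0 by (simp add: TS_def)
  next
    case (Suc t)
    show ?case
    proof (cases "sites R \<subseteq> pos ` {..t}")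
      case True
      then show ?thesis by (meson atMost_iff image_mono le_SucI subset_iff)
    next
      case False
      then have IH: "guess (state t) \<le> TS" "budget TS t + int t \<le> budget TS 0"
        using Suc.IH by auto
      have "guess (state (Suc t)) \<le> TS \<and> budget TS (Suc t) < budget TS t"
        using budget_decreases[OF TS_def J(1)[folded TS_def] IH(1) False] .
      then show ?thesis using IH(2) by simp
    qed
  qed
  have budget_0: "budget TS 0 \<le> 20 * int K * int Lm"
  proof -
    have "potential (state 0) \<le> 5 * int K * int 1"
      unfolding state_0 by (rule potential_new_phase) simp
    then have "budget TS 0 \<le> 10 * int K * int TS" using guess_0 by (simp add: budget_def algebra_simps)
    also have "\<dots> \<le> 10 * int K * (2 * int Lm)"
      using J(2) unfolding TS_def by (intro mult_left_mono) linarith+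
    finally show ?thesis by simp
  qed
  define t0 where "t0 = nat (budget TS 0)"
  have "sites R \<subseteq> pos ` {..t0}"
  proof (rule ccontr)
    assume "\<not> sites R \<subseteq> pos ` {..t0}"
    then have "guess (state t0) \<le> TS" "budget TS t0 + int t0 \<le> budget TS 0" using claim[of t0] by auto
    moreover have "1 \<le> potential (state t0)" by (rule potential_pos[OF invariant_always])
    moreover have "0 \<le> 10 * int K * (int TS - int (guess (state t0)))" using calculation(1) by simp
    ultimately have "int t0 < budget TS 0" unfolding budget_def by linarith
    then show False unfolding t0_def by linarith
  qed
  moreover have "t0 \<le> 20 * K * Lm" unfolding t0_def using budget_0 by (simp add: nat_le_iff)
  ultimately show ?thesis by blast
qed

lemma pos_in_sites: "pos t \<in> sites R"
proof -
  have I: "invariant t (state t)" by (rule invariant_always)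
  let ?d = "carrier_of (mode (state t))"
  have "pos t = at R ?d t" using inv_located[OF I] by simp
  moreover have "at R ?d t \<in> set (route R ?d)" by (rule at_in_route[OF inv_carrier[OF I] wf])
  moreover have "set (route R ?d) \<subseteq> sites R" using wf inv_carrier[OF I] by (simp add: pv_wf_def)
  ultimately show ?thesis by auto
qed

end

lemma explorer_explores:
  assumes wf: "pv_wf R" and feas: "feasible R" and per: "common_period R Lm"
  shows "explores_within R (explorer (card (sites R))) (20 * card (carriers R) * Lm)"
  unfolding explores_within_def
proof
  fix x0 assume x0: "x0 \<in> start R"
  interpret E: exploration R x0 Lm using wf x0 feas per by unfold_locales
  let ?n = "card (sites R)" and ?A = "explorer (card (sites R))"
  define m where "m = (LEAST t. sites R \<subseteq> E.pos ` {..t})"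
  obtain t0 where t0: "t0 \<le> 20 * E.K * Lm" "sites R \<subseteq> E.pos ` {..t0}"
    using E.covered_within by blast
  have covered: "sites R \<subseteq> E.pos ` {..m}" unfolding m_def using t0(2) by (rule LeastI)
  have "m \<le> t0" unfolding m_def using t0(2) by (rule Least_le)
  have fin: "finite (sites R)" using wf by (simp add: pv_wf_def)
  have seen_sub: "E.pos ` {..t} \<subseteq> sites R" for t using E.pos_in_sites by blast
  have few_seen: "card (run_pos R x0 ` {..s}) < ?n" if "s < m" for s
  proof -
    have "\<not> sites R \<subseteq> E.pos ` {..s}" using not_less_Least[of s] that unfolding m_def by blast
    then have "E.pos ` {..s} \<subset> sites R" using seen_sub[of s] by blast
    then show ?thesis using fin psubset_card_mono by (auto simp: E.pos_def)
  qed
  have hist: "hist R ?A x0 t = run_hist R x0 t" if "t \<le> m" for t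
    using that few_seen by (intro hist_explorer) auto
  have agent_pos: "agent_pos R ?A x0 t = E.pos t" if "t \<le> m" for t
  proof -
    have "last (run_hist R x0 t) = observe R (run_pos R x0 t) t" by (simp add: last_map del: upt_Suc)
    then show ?thesis using hist[OF that] by (simp add: agent_pos_def observe_def E.pos_def)
  qed
  have moves: "\<exists>c\<in>carriers R. ?A (hist R ?A x0 t) = Ride c \<and> at R c t = agent_pos R ?A x0 t"
    if "t < m" for t
  proof -
    have I: "E.invariant t (E.state t)" by (rule E.invariant_always)
    have "?A (hist R ?A x0 t) = Ride (ride (E.state t))"
      using hist[of t] that few_seen[OF that] sites_run_hist[of R x0 t] foldl_run_hist[of R x0 t]
      by (simp add: explorer_def E.state_def)
    then show ?thesis using E.invariantD(1-3)[OF I] agent_pos[of t] that by auto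
  qed
  have halts: "?A (hist R ?A x0 m) = Halt"
  proof -
    have "E.pos ` {..m} = sites R" using covered seen_sub[of m] by blast
    then show ?thesis using hist[of m] sites_run_hist[of R x0 m] by (simp add: explorer_def E.pos_def)
  qed
  have "m \<le> 20 * card (carriers R) * Lm" using \<open>m \<le> t0\<close> t0(1) by (simp add: E.K_def)
  moreover have "sites R \<subseteq> agent_pos R ?A x0 ` {..m}" using covered agent_pos by auto
  ultimately show "\<exists>m\<le>20 * card (carriers R) * Lm.
      (\<forall>t<m. \<exists>c\<in>carriers R. ?A (hist R ?A x0 t) = Ride c \<and> at R c t = agent_pos R ?A x0 t)
      \<and> ?A (hist R ?A x0 m) = Halt \<and> sites R \<subseteq> agent_pos R ?A x0 ` {..m}"
    using moves halts by blast
qed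

theorem mainTheorem10:
  shows "(\<exists>C0::nat. \<forall>n\<ge>1. \<exists>A::algorithm. \<forall>R.
            pv_wf R \<and> card (sites R) = n \<and> feasible R \<longrightarrow>
            explores_within R A (C0 * card (carriers R) * period R ^ 2))
       \<and> (\<exists>C0::nat. \<forall>n\<ge>1. \<exists>A::algorithm. \<forall>R.
            pv_wf R \<and> card (sites R) = n \<and> homogeneous R \<and> feasible R \<longrightarrow>
            explores_within R A (C0 * card (carriers R) * period R))"
proof (intro conjI exI[of _ 20] allI impI)
  fix n :: nat
  show "\<exists>A. \<forall>R. pv_wf R \<and> card (sites R) = n \<and> feasible R \<longrightarrow>
            explores_within R A (20 * card (carriers R) * period R ^ 2)"
    using explorer_explores[OF _ _ common_period_general] by (intro exI[of _ "explorer n"]) blast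
  show "\<exists>A. \<forall>R. pv_wf R \<and> card (sites R) = n \<and> homogeneous R \<and> feasible R \<longrightarrow>
            explores_within R A (20 * card (carriers R) * period R)"
    using explorer_explores[OF _ _ common_period_homogeneous] by (intro exI[of _ "explorer n"]) blast
qed

end
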